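(* Let $R$ be a ring with unity and involution $*$, let $a\in R$ and let $m$ be a nonnegative integer. Then $a$ is left dual pseudo core invertible if and only if $a^k$ is left dual $a^m$-core invertible for some positive integer $k$. In this case, if $x$ is a left dual $a^m$-core inverse of $a^k$, then $xa^{k+m-1}$ is a left dual pseudo core inverse of $a$; and if $y\in R$ satisfies $a^kya=a^k$, $(ya)^*=ya$ and $y^2a=y$, then $y^{k+m}$ is a left dual $a^m$-core inverse of $a^k$.
   Context: Here $a^0=1$. An element $a$ is left dual pseudo core invertible if there exist $y\in R$ and a positive integer $k$ such that $a^kya=a^k$, $(ya)^*=ya$ and $y^2a=y$; such $y$ is a left dual pseudo core inverse of $a$. For $u,v\in R$, $u$ is left dual $v$-core invertible if there exists $x\in R$ with $uxvu=u$, $(xvu)^*=xvu$ and $x^2vu=x$; such $x$ is a left dual $v$-core inverse of $u$. *)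

theory Defs
  imports Main
begin

class ring_1_inv = ring_1 +
  fixes invol :: "'a \<Rightarrow> 'a" ("_\<^sup>\<star>" [1000] 999)
  assumes invol_add: "(a + b)\<^sup>\<star> = a\<^sup>\<star> + b\<^sup>\<star>"
    and invol_mult: "(a * b)\<^sup>\<star> = b\<^sup>\<star> * a\<^sup>\<star>"
    and invol_invol: "(a\<^sup>\<star>)\<^sup>\<star> = a"

definition ldpc_inverse :: "'a::ring_1_inv \<Rightarrow> 'a \<Rightarrow> bool" where
  "ldpc_inverse a y \<longleftrightarrow>
     (\<exists>k::nat. k > 0 \<and> a ^ k * y * a = a ^ k \<and> (y * a)\<^sup>\<star> = y * a \<and> y ^ 2 * a = y)"

definition ldpc_invertible :: "'a::ring_1_inv \<Rightarrow> bool" where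
  "ldpc_invertible a \<longleftrightarrow> (\<exists>y. ldpc_inverse a y)"

definition ldvcore_inverse :: "'a::ring_1_inv \<Rightarrow> 'a \<Rightarrow> 'a \<Rightarrow> bool" where
  "ldvcore_inverse u v x \<longleftrightarrow>
     u * x * v * u = u \<and> (x * v * u)\<^sup>\<star> = x * v * u \<and> x ^ 2 * v * u = x"

definition ldvcore_invertible :: "'a::ring_1_inv \<Rightarrow> 'a \<Rightarrow> bool" where
  "ldvcore_invertible u v \<longleftrightarrow> (\<exists>x. ldvcore_inverse u v x)"

end

theory Submission
  imports Defs
begin

text \<open>If \<open>y ^ 2 * a = y\<close>, then \<open>y ^ n * a ^ n = y * a\<close> for every \<open>n > 0\<close>:
  the hypothesis peels off one pair of factors at a time. Hence a left dual pseudo core inverse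
  \<open>y\<close> of \<open>a\<close> gives \<open>y ^ (k + m) * a ^ m * a ^ k = y * a\<close>, so the three identities
  defining a left dual \<open>a ^ m\<close>-core inverse of \<open>a ^ k\<close> are those of \<open>y\<close> in disguise.
  Conversely, a left dual \<open>a ^ m\<close>-core inverse \<open>x\<close> of \<open>a ^ k\<close> satisfies
  \<open>x * a ^ (k + m - 1) * a = x * a ^ m * a ^ k\<close>, and the identities transfer back.\<close>

lemma power_Suc_mult_power_Suc_eq:
  fixes y a :: "'a::monoid_mult"
  assumes "y ^ 2 * a = y"
  shows "y ^ Suc n * a ^ Suc n = y * a"
proof (induction n)
  case 0
  then show ?case by simp
next
  case (Suc n)
  have "y ^ Suc (Suc n) * a ^ Suc (Suc n) = y ^ n * y ^ 2 * (a * a ^ Suc n)"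
    by (simp flip: power_add)
  also have "\<dots> = y ^ n * (y ^ 2 * a) * a ^ Suc n"
    by (simp add: mult.assoc)
  also have "\<dots> = y ^ Suc n * a ^ Suc n"
    using assms by (simp add: power_commutes)
  finally show ?case
    using Suc.IH by simp
qed

lemma power_Suc_mult_absorb:
  fixes y a :: "'a::monoid_mult"
  assumes "y ^ 2 * a = y"
  shows "y ^ Suc n * (y * a) = y ^ Suc n"
proof -
  have "y ^ Suc n * (y * a) = y ^ n * y * (y * a)"
    by (simp add: power_commutes)
  also have "\<dots> = y ^ n * (y ^ 2 * a)"
    by (simp add: power2_eq_square mult.assoc)
  also have "\<dots> = y ^ Suc n"
    using assms by (simp add: power_commutes)
  finally show ?thesis .
qed

lemma ldvcore_inverse_power_of_ldpc_identities:
  fixes a y :: "'a::ring_1_inv"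
  assumes "k > 0" and left: "a ^ k * y * a = a ^ k" and sym: "(y * a)\<^sup>\<star> = y * a"
    and idem: "y ^ 2 * a = y"
  shows "ldvcore_inverse (a ^ k) (a ^ m) (y ^ (k + m))"
proof -
  obtain n where n: "k + m = Suc n"
    using \<open>k > 0\<close> by (cases "k + m") auto
  have key: "y ^ (k + m) * a ^ m * a ^ k = y * a"
    using power_Suc_mult_power_Suc_eq[OF idem, of n] n
    by (simp add: mult.assoc power_add[symmetric] add.commute)
  have "a ^ k * y ^ (k + m) * a ^ m * a ^ k = a ^ k"
    using key left by (simp add: mult.assoc)
  moreover have "(y ^ (k + m))\<^sup>2 * a ^ m * a ^ k = y ^ (k + m)"
    using key power_Suc_mult_absorb[OF idem, of n] n
    by (simp add: power2_eq_square mult.assoc)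
  ultimately show ?thesis
    unfolding ldvcore_inverse_def using key sym by simp
qed

lemma ldpc_inverse_of_ldvcore_inverse:
  fixes a x :: "'a::ring_1_inv"
  assumes "k > 0" and "ldvcore_inverse (a ^ k) (a ^ m) x"
  shows "ldpc_inverse a (x * a ^ (k + m - 1))"
proof -
  have left: "a ^ k * x * a ^ m * a ^ k = a ^ k"
    and sym: "(x * a ^ m * a ^ k)\<^sup>\<star> = x * a ^ m * a ^ k"
    and idem: "x ^ 2 * a ^ m * a ^ k = x"
    using assms(2) unfolding ldvcore_inverse_def by auto
  define y where "y = x * a ^ (k + m - 1)"
  have ya: "y * a = x * a ^ m * a ^ k"
    unfolding y_def using \<open>k > 0\<close>
    by (simp add: mult.assoc power_add[symmetric] power_Suc2[symmetric] add.commute)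
  have y_expand: "y = x ^ 2 * a ^ (k + m - 1 + m) * a ^ k"
    unfolding y_def
    by (subst (1) idem[symmetric]) (simp add: mult.assoc add_ac flip: power_add)
  have "y * (y * a) = x ^ 2 * a ^ (k + m - 1 + m) * (a ^ k * x * a ^ m * a ^ k)"
    using y_expand ya by (simp add: mult.assoc)
  also have "\<dots> = y"
    using left y_expand by (simp add: mult.assoc)
  finally have "y ^ 2 * a = y"
    by (simp add: power2_eq_square mult.assoc)
  moreover have "a ^ k * y * a = a ^ k"
    using ya left by (simp add: mult.assoc)
  moreover have "(y * a)\<^sup>\<star> = y * a"
    using ya sym by simp
  ultimately show ?thesis
    unfolding ldpc_inverse_def y_def[symmetric] using \<open>k > 0\<close> by blast
qed

theorem proposition3p4:
  fixes a :: "'a::ring_1_inv" and m :: nat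
  shows "(ldpc_invertible a \<longleftrightarrow> (\<exists>k::nat. k > 0 \<and> ldvcore_invertible (a ^ k) (a ^ m)))
    \<and> (\<forall>(k::nat) x. k > 0 \<longrightarrow> ldvcore_inverse (a ^ k) (a ^ m) x
          \<longrightarrow> ldpc_inverse a (x * a ^ (k + m - 1)))
    \<and> (\<forall>(k::nat) y. k > 0 \<longrightarrow> a ^ k * y * a = a ^ k \<longrightarrow> (y * a)\<^sup>\<star> = y * a \<longrightarrow> y ^ 2 * a = y
          \<longrightarrow> ldvcore_inverse (a ^ k) (a ^ m) (y ^ (k + m)))"
proof (intro conjI allI impI)
  show "ldpc_invertible a \<longleftrightarrow> (\<exists>k::nat. k > 0 \<and> ldvcore_invertible (a ^ k) (a ^ m))"
  proof
    assume "ldpc_invertible a"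
    then obtain y k where "k > 0" "a ^ k * y * a = a ^ k" "(y * a)\<^sup>\<star> = y * a" "y ^ 2 * a = y"
      unfolding ldpc_invertible_def ldpc_inverse_def by blast
    then show "\<exists>k. k > 0 \<and> ldvcore_invertible (a ^ k) (a ^ m)"
      unfolding ldvcore_invertible_def by (blast intro: ldvcore_inverse_power_of_ldpc_identities)
  next
    assume "\<exists>k. k > 0 \<and> ldvcore_invertible (a ^ k) (a ^ m)"
    then show "ldpc_invertible a"
      unfolding ldvcore_invertible_def ldpc_invertible_def
      by (blast intro: ldpc_inverse_of_ldvcore_inverse)
  qed
qed (blast intro: ldpc_inverse_of_ldvcore_inverse ldvcore_inverse_power_of_ldpc_identities)+

end
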